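(* For $n\ge1$ and $y>1$, $\sigma_n(y)=\delta_{2n}(2/y)$.
   Context: $\mathcal{F}_n$ is the set of real trigonometric polynomials of order at most $n$; $\mathbb{T}=[0,2\pi)$ with endpoints identified, with Lebesgue measure $\mathrm{mes}$; $\mu(f)=\mathrm{mes}\{t\in\mathbb{T}:|f(t)|\ge1\}$; $\mathcal{F}_n(y)=\{y\cos nt+f_{n-1}:f_{n-1}\in\mathcal{F}_{n-1}\}$; $\sigma_n(y)=\inf\{\mu(f):f\in\mathcal{F}_n(y)\}$. $\mathfrak{P}_m(\Gamma)$ is the set of monic algebraic polynomials of degree $m$ all of whose zeros lie on the unit circle $\Gamma$, and for $0\le h\le2$, $\delta_m(h)=\inf\{\mathrm{mes}\{t\in\mathbb{T}:|P(e^{it})|\ge h\}:P\in\mathfrak{P}_m(\Gamma)\}$. *)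

theory Defs
  imports "HOL-Analysis.Analysis" "HOL-Computational_Algebra.Polynomial"
begin

definition trig_poly :: "nat \<Rightarrow> (real \<Rightarrow> real) \<Rightarrow> bool" where
  "trig_poly n f \<longleftrightarrow> (\<exists>a b :: nat \<Rightarrow> real.
      f = (\<lambda>t. \<Sum>k\<le>n. a k * cos (real k * t) + b k * sin (real k * t)))"

definition mu :: "(real \<Rightarrow> real) \<Rightarrow> real" where
  "mu f = measure lborel {t \<in> {0..<2*pi}. \<bar>f t\<bar> \<ge> 1}"

definition F_y :: "nat \<Rightarrow> real \<Rightarrow> (real \<Rightarrow> real) set" where
  "F_y n y = {f. \<exists>g. trig_poly (n - 1) g \<and> f = (\<lambda>t. y * cos (real n * t) + g t)}"

definition sigma :: "nat \<Rightarrow> real \<Rightarrow> real" where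
  "sigma n y = Inf (mu ` F_y n y)"

definition unimodular_monic :: "nat \<Rightarrow> complex poly set" where
  "unimodular_monic m = {p. degree p = m \<and> lead_coeff p = 1 \<and>
      (\<forall>z. poly p z = 0 \<longrightarrow> cmod z = 1)}"

definition delta :: "nat \<Rightarrow> real \<Rightarrow> real" where
  "delta m h = Inf ((\<lambda>p. measure lborel {t \<in> {0..<2*pi}. cmod (poly p (cis t)) \<ge> h})
                     ` unimodular_monic m)"

end

theory Submission
  imports Defs "HOL-Computational_Algebra.Fundamental_Theorem_Algebra"
begin

(*
  The two infima are compared through a dictionary between the two families.
  (1) Trigonometric side to polynomial side: f(t) = y cos nt + g(t) with g of order n-1
      can be written as f(t) = (y/2) e^{-int} Q(e^{it}) with Q monic of degree 2n and
      Q(0) = 1.  Moving every root x of Q radially to sgn x gives a monic P with all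
      roots on the unit circle and |P| <= |Q| on the circle (since |Q(0)| = 1), hence
      {|P(e^{it})| >= 2/y} is contained in {|f(t)| >= 1}.
  (2) Polynomial side to trigonometric side: for P monic of degree 2n with unimodular
      roots, the product of suitable square roots L of the -x (x the roots) makes
      conj(L) e^{-int} P(e^{it}) real; after a rotation of t it equals
      (2/y) f(t) for some f in F_n(y), and the level sets have the same measure
      by translation invariance of Lebesgue measure for 2pi-periodic sets.
  Each element of one family is thus dominated by an element of the other, so the
  infima agree.
*)

lemma trig_poly_zero: "trig_poly m (\<lambda>t. 0)"
  unfolding trig_poly_def by (rule exI[of _ "\<lambda>_. 0"], rule exI[of _ "\<lambda>_. 0"]) simp

lemma trig_poly_add:
  assumes "trig_poly m f" "trig_poly m g" shows "trig_poly m (\<lambda>t. f t + g t)"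
proof -
  obtain a b where f: "f = (\<lambda>t. \<Sum>k\<le>m. a k * cos (real k * t) + b k * sin (real k * t))"
    using assms(1) unfolding trig_poly_def by blast
  obtain c d where g: "g = (\<lambda>t. \<Sum>k\<le>m. c k * cos (real k * t) + d k * sin (real k * t))"
    using assms(2) unfolding trig_poly_def by blast
  show ?thesis unfolding trig_poly_def
    by (rule exI[of _ "\<lambda>k. a k + c k"], rule exI[of _ "\<lambda>k. b k + d k"])
       (simp add: f g sum.distrib[symmetric] algebra_simps)
qed

lemma trig_poly_scale:
  assumes "trig_poly m f" shows "trig_poly m (\<lambda>t. c * f t)"
proof -
  obtain a b where f: "f = (\<lambda>t. \<Sum>k\<le>m. a k * cos (real k * t) + b k * sin (real k * t))"
    using assms(1) unfolding trig_poly_def by blast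
  show ?thesis unfolding trig_poly_def
    by (rule exI[of _ "\<lambda>k. c * a k"], rule exI[of _ "\<lambda>k. c * b k"])
       (simp add: f sum_distrib_left algebra_simps)
qed

lemma trig_poly_sum:
  assumes "finite A" "\<And>i. i \<in> A \<Longrightarrow> trig_poly m (f i)"
  shows "trig_poly m (\<lambda>t. \<Sum>i\<in>A. f i t)"
  using assms
proof (induction A rule: finite_induct)
  case empty then show ?case using trig_poly_zero by simp
next
  case (insert x F)
  then show ?case using trig_poly_add[of m "f x" "\<lambda>t. \<Sum>i\<in>F. f i t"] by simp
qed

lemma trig_poly_harmonic:
  assumes "k \<le> m" shows "trig_poly m (\<lambda>t. A * cos (real k * t) + B * sin (real k * t))"
  unfolding trig_poly_def
  by (rule exI[of _ "\<lambda>i. if i = k then A else 0"], rule exI[of _ "\<lambda>i. if i = k then B else 0"])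
     (simp add: if_distrib[of "\<lambda>x. x * _"] sum.distrib sum.delta assms cong: if_cong)

text \<open>The real part of a shifted complex exponential e^{ij(s+a)} with |j| <= m, the form
  in which the middle coefficients of a polynomial appear on the circle.\<close>

lemma trig_poly_Re_cis:
  fixes j :: int and d :: complex
  assumes "\<bar>j\<bar> \<le> int m"
  shows "trig_poly m (\<lambda>s. Re (d * cis (of_int j * (s + a))))"
proof -
  define e where "e = d * cis (of_int j * a)"
  have shift: "Re (d * cis (of_int j * (s + a))) = Re (e * cis (of_int j * s))" for s
    unfolding e_def by (simp add: mult.assoc cis_mult algebra_simps)
  show ?thesis
  proof (cases "j \<ge> 0")
    case True
    have "Re (e * cis (of_int j * s))
        = Re e * cos (real (nat j) * s) + (- Im e) * sin (real (nat j) * s)" for s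
      using True by (simp add: cis.sel)
    then have "(\<lambda>s. Re (d * cis (of_int j * (s + a))))
        = (\<lambda>s. Re e * cos (real (nat j) * s) + (- Im e) * sin (real (nat j) * s))"
      using shift by presburger
    then show ?thesis using trig_poly_harmonic[of "nat j" m "Re e" "- Im e"] assms True
      by simp
  next
    case False
    have "Re (e * cis (of_int j * s))
        = Re e * cos (real (nat (-j)) * s) + Im e * sin (real (nat (-j)) * s)" for s
      using False by (simp add: cis.sel)
    then have "(\<lambda>s. Re (d * cis (of_int j * (s + a))))
        = (\<lambda>s. Re e * cos (real (nat (-j)) * s) + Im e * sin (real (nat (-j)) * s))"
      using shift by presburger
    then show ?thesis using trig_poly_harmonic[of "nat (-j)" m "Re e" "Im e"] assms False
      by simp
  qed
qed

lemma trig_poly_continuous: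
  assumes "trig_poly m f" shows "continuous_on UNIV f"
proof -
  obtain a b where f: "f = (\<lambda>t. \<Sum>k\<le>m. a k * cos (real k * t) + b k * sin (real k * t))"
    using assms(1) unfolding trig_poly_def by blast
  show ?thesis unfolding f by (intro continuous_intros)
qed

section \<open>Lebesgue measure of periodic sets over one period\<close>

lemma measure_lborel_translate:
  assumes "A \<in> sets borel"
  shows "measure lborel ((\<lambda>x::real. x + c) -` A) = measure lborel A"
proof -
  have "measure lborel A = measure (distr lborel borel ((+) c)) A"
    by (simp add: lborel_distr_plus)
  also have "\<dots> = measure lborel ((+) c -` A \<inter> space lborel)"
    by (rule measure_distr) (use assms in auto)
  also have "(+) c -` A \<inter> space lborel = (\<lambda>x::real. x + c) -` A" by (auto simp: add.commute)
  finally show ?thesis by simp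
qed

lemma emeasure_interval_subset_finite: "emeasure lborel {t \<in> {a..<b::real}. P t} \<noteq> \<infinity>"
proof -
  have "bounded {t \<in> {a..<b::real}. P t}"
    by (rule bounded_subset[OF bounded_closed_interval[of a b]]) auto
  then show ?thesis using emeasure_bounded_finite by fastforce
qed

lemma sets_lborel_superlevel:
  assumes "continuous_on UNIV (h :: real \<Rightarrow> real)"
  shows "{t \<in> {a..<b}. c \<le> h t} \<in> sets lborel"
proof -
  have "closed {t. c \<le> h t}" using assms by (intro closed_Collect_le continuous_intros) auto
  then have "{t. c \<le> h t} \<in> sets borel" by simp
  moreover have "{t \<in> {a..<b}. c \<le> h t} = {a..<b} \<inter> {t. c \<le> h t}" by auto
  ultimately show ?thesis by simp
qed

context
  fixes Q :: "real \<Rightarrow> bool"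
  assumes periodic: "\<And>x k. Q (x + 2*pi * of_int k) = Q x"
    and borel_Q: "{x. Q x} \<in> sets borel"
begin

private lemma borel_window: "{t \<in> {a..<b}. Q t} \<in> sets borel"
proof -
  have "{t \<in> {a..<b}. Q t} = {a..<b} \<inter> {x. Q x}" by auto
  then show ?thesis using borel_Q by simp
qed

private lemma measure_window_shift:
  "measure lborel {t \<in> {a..<b}. Q (t + d)} = measure lborel {t \<in> {a+d..<b+d}. Q t}"
proof -
  have "{t \<in> {a..<b}. Q (t + d)} = (\<lambda>x. x + d) -` {t \<in> {a+d..<b+d}. Q t}" by auto
  then show ?thesis using measure_lborel_translate[OF borel_window[of "a+d" "b+d"], of d] by simp
qed

private lemma measure_window_split:
  assumes "a \<le> b" "b \<le> c"
  shows "measure lborel {t \<in> {a..<c}. Q t}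
       = measure lborel {t \<in> {a..<b}. Q t} + measure lborel {t \<in> {b..<c}. Q t}"
proof -
  have "{t \<in> {a..<c}. Q t} = {t \<in> {a..<b}. Q t} \<union> {t \<in> {b..<c}. Q t}" using assms by auto
  moreover have "{t \<in> {a..<b}. Q t} \<inter> {t \<in> {b..<c}. Q t} = {}" by auto
  ultimately show ?thesis
    using measure_Union[of lborel "{t \<in> {a..<b}. Q t}" "{t \<in> {b..<c}. Q t}"]
      emeasure_interval_subset_finite borel_window by simp
qed

private lemma measure_window_period:
  assumes "0 \<le> a" "a \<le> 2*pi"
  shows "measure lborel {t \<in> {a..<a+2*pi}. Q t} = measure lborel {t \<in> {0..<2*pi}. Q t}"
proof -
  have tail: "measure lborel {t \<in> {2*pi..<a+2*pi}. Q t} = measure lborel {t \<in> {0..<a}. Q t}"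
  proof -
    have "measure lborel {t \<in> {0..<a}. Q t} = measure lborel {t \<in> {0..<a}. Q (t + 2*pi)}"
      using periodic[of _ 1] by simp
    also have "\<dots> = measure lborel {t \<in> {2*pi..<a+2*pi}. Q t}"
      by (subst measure_window_shift) simp
    finally show ?thesis by simp
  qed
  have "measure lborel {t \<in> {a..<a+2*pi}. Q t}
      = measure lborel {t \<in> {a..<2*pi}. Q t} + measure lborel {t \<in> {2*pi..<a+2*pi}. Q t}"
    using assms by (intro measure_window_split) auto
  also have "\<dots> = measure lborel {t \<in> {0..<2*pi}. Q t}"
    unfolding tail using assms measure_window_split[of 0 a "2*pi"] by simp
  finally show ?thesis .
qed

lemma measure_periodic_translate:
  "measure lborel {t \<in> {0..<2*pi}. Q (t + c)} = measure lborel {t \<in> {0..<2*pi}. Q t}"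
proof -
  define k where "k = \<lfloor>c / (2*pi)\<rfloor>"
  define a where "a = c - 2*pi * of_int k"
  have a_ge: "0 \<le> a" unfolding a_def k_def
    using floor_divide_lower[of "2*pi" c] by (simp add: algebra_simps)
  have a_le: "a \<le> 2*pi" unfolding a_def k_def
    using floor_divide_upper[of "2*pi" c] by (simp add: algebra_simps)
  have "Q (t + c) = Q (t + a)" for t
    using periodic[of "t + a" k] unfolding a_def by (simp add: algebra_simps)
  then have "measure lborel {t \<in> {0..<2*pi}. Q (t + c)}
           = measure lborel {t \<in> {0..<2*pi}. Q (t + a)}" by simp
  also have "\<dots> = measure lborel {t \<in> {a..<a+2*pi}. Q t}"
    by (subst measure_window_shift) (simp add: add.commute)
  also have "\<dots> = measure lborel {t \<in> {0..<2*pi}. Q t}"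
    by (rule measure_window_period[OF a_ge a_le])
  finally show ?thesis .
qed

end

section \<open>Projecting the roots of a polynomial onto the unit circle\<close>

text \<open>Key one-factor estimate: on the unit circle, replacing the root x by sgn x shrinks
  the linear factor by at least sqrt |x|, because
  |w - x|^2 - |x| |w - sgn x|^2 = (1 - |x|)^2.\<close>

lemma factor_projection_ineq:
  fixes w x :: complex
  assumes w: "cmod w = 1" and x: "x \<noteq> 0"
  shows "cmod (w - sgn x) * sqrt (cmod x) \<le> cmod (w - x)"
proof -
  define a where "a = Re w" define b where "b = Im w"
  define p where "p = Re x" define q where "q = Im x"
  define r where "r = cmod x"
  have r_pos: "r > 0" using x unfolding r_def by simp
  have ab: "a^2 + b^2 = 1" using w unfolding a_def b_def cmod_def by simp
  have pq: "p^2 + q^2 = r^2" unfolding p_def q_def r_def cmod_def by simp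
  have sgn_x: "sgn x = Complex (p / r) (q / r)"
    unfolding p_def q_def r_def by (simp add: sgn_div_norm complex_eq_iff field_simps)
  have lhs: "(cmod (w - sgn x))^2 * r = 2*r - 2*(a*p+b*q)"
  proof -
    have "(cmod (w - sgn x))^2 = (a - p/r)^2 + (b - q/r)^2"
      unfolding sgn_x a_def b_def by (simp add: cmod_power2)
    also have "\<dots> = (a^2+b^2) - 2*(a*p+b*q)/r + (p^2+q^2)/r^2"
      using r_pos by (simp add: power2_eq_square field_simps)
    also have "\<dots> = 2 - 2*(a*p+b*q)/r" using ab pq r_pos by simp
    finally show ?thesis using r_pos by (simp add: field_simps)
  qed
  have rhs: "(cmod (w - x))^2 = 1 - 2*(a*p+b*q) + r^2"
  proof -
    have "(cmod (w - x))^2 = (a - p)^2 + (b - q)^2"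
      unfolding a_def b_def p_def q_def by (simp add: cmod_power2)
    also have "\<dots> = (a^2+b^2) - 2*(a*p+b*q) + (p^2+q^2)"
      by (simp add: power2_eq_square field_simps)
    finally show ?thesis using ab pq by simp
  qed
  have "(1 - r)^2 = 1 - 2*r + r^2" by (simp add: power2_eq_square algebra_simps)
  then have "(cmod (w - sgn x))^2 * r \<le> (cmod (w - x))^2"
    using lhs rhs zero_le_power2[of "1 - r"] by linarith
  then have "sqrt ((cmod (w - sgn x))^2 * r) \<le> sqrt ((cmod (w - x))^2)"
    by (rule real_sqrt_le_mono)
  then show ?thesis unfolding r_def by (simp add: real_sqrt_mult)
qed

text \<open>The projected product: multiplying the one-factor estimate over all roots,
  |P(w)| sqrt |Q(0)| <= |Q(w)| on the circle, where P has the projected roots.\<close>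

lemma projected_product:
  fixes M :: "complex multiset"
  assumes "\<forall>x\<in>#M. x \<noteq> 0"
  defines "P \<equiv> (\<Prod>x\<in>#M. [:- sgn x, 1:])" and "Q \<equiv> (\<Prod>x\<in>#M. [:- x, 1:])"
  shows "degree P = size M \<and> lead_coeff P = 1 \<and> (\<forall>z. poly P z = 0 \<longrightarrow> cmod z = 1) \<and>
         (\<forall>w. cmod w = 1 \<longrightarrow> cmod (poly P w) * sqrt (cmod (poly Q 0)) \<le> cmod (poly Q w))"
  using assms(1) unfolding P_def Q_def
proof (induction M)
  case empty
  then show ?case by simp
next
  case (add x M)
  define P where "P = (\<Prod>x\<in>#M. [:- sgn x, 1:])"
  define Q where "Q = (\<Prod>x\<in>#M. [:- x, 1:])"
  have IH: "degree P = size M \<and> lead_coeff P = 1 \<and> (\<forall>z. poly P z = 0 \<longrightarrow> cmod z = 1) \<and>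
         (\<forall>w. cmod w = 1 \<longrightarrow> cmod (poly P w) * sqrt (cmod (poly Q 0)) \<le> cmod (poly Q w))"
    unfolding P_def Q_def by (rule add.IH) (use add.prems in simp)
  have x: "x \<noteq> 0" using add by simp
  have "P \<noteq> 0" using IH by auto
  then have "degree ([:- sgn x, 1:] * P) = Suc (size M)"
    using IH by (subst degree_mult_eq) auto
  moreover have "lead_coeff ([:- sgn x, 1:] * P) = 1"
  proof -
    have "lead_coeff P = 1" using IH by blast
    then show ?thesis using lead_coeff_mult[of "[:- sgn x, 1:]" P] by simp
  qed
  moreover have "\<forall>z. poly ([:- sgn x, 1:] * P) z = 0 \<longrightarrow> cmod z = 1"
    using IH x by (auto simp: norm_sgn)
  moreover have "cmod (poly ([:- sgn x, 1:] * P) w) * sqrt (cmod (poly ([:- x, 1:] * Q) 0))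
       \<le> cmod (poly ([:- x, 1:] * Q) w)" if w: "cmod w = 1" for w
  proof -
    have "cmod (poly ([:- sgn x, 1:] * P) w) * sqrt (cmod (poly ([:- x, 1:] * Q) 0))
        = (cmod (w - sgn x) * sqrt (cmod x)) * (cmod (poly P w) * sqrt (cmod (poly Q 0)))"
    proof -
      have "poly ([:- sgn x, 1:] * P) w = (w - sgn x) * poly P w" by (simp add: algebra_simps)
      moreover have "poly ([:- x, 1:] * Q) 0 = (- x) * poly Q 0" by simp
      ultimately show ?thesis by (simp add: norm_mult real_sqrt_mult mult_ac)
    qed
    also have "\<dots> \<le> cmod (w - x) * cmod (poly Q w)"
      using factor_projection_ineq[OF w x] IH w by (intro mult_mono) auto
    also have "\<dots> = cmod (poly ([:- x, 1:] * Q) w)"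
    proof -
      have "poly ([:- x, 1:] * Q) w = (w - x) * poly Q w" by (simp add: algebra_simps)
      then show ?thesis by (simp add: norm_mult)
    qed
    finally show ?thesis .
  qed
  ultimately show ?case unfolding P_def Q_def by simp
qed

lemma unimodular_minorant:
  fixes Q :: "complex poly"
  assumes monic: "lead_coeff Q = 1" and const: "cmod (poly Q 0) = 1"
  shows "\<exists>P \<in> unimodular_monic (degree Q). \<forall>w. cmod w = 1 \<longrightarrow> cmod (poly P w) \<le> cmod (poly Q w)"
proof -
  define M where "M = proots Q"
  have Q_prod: "Q = (\<Prod>x\<in>#M. [:- x, 1:])"
    using complex_poly_decompose_multiset[of Q] monic unfolding M_def by simp
  have nonzero: "\<forall>x\<in>#M. x \<noteq> 0"
  proof
    fix x assume "x \<in># M"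
    moreover have "Q \<noteq> 0" using monic by auto
    ultimately have "poly Q x = 0" unfolding M_def by simp
    then show "x \<noteq> 0" using const by auto
  qed
  define P where "P = (\<Prod>x\<in>#M. [:- sgn x, 1:])"
  have P: "degree P = size M \<and> lead_coeff P = 1 \<and> (\<forall>z. poly P z = 0 \<longrightarrow> cmod z = 1) \<and>
         (\<forall>w. cmod w = 1 \<longrightarrow> cmod (poly P w) * sqrt (cmod (poly Q 0)) \<le> cmod (poly Q w))"
    unfolding P_def Q_prod by (rule projected_product[OF nonzero])
  have "size M = degree Q" unfolding M_def by (rule size_proots_complex)
  then have "P \<in> unimodular_monic (degree Q)"
    using P unfolding unimodular_monic_def mem_Collect_eq by metis
  moreover have "\<forall>w. cmod w = 1 \<longrightarrow> cmod (poly P w) \<le> cmod (poly Q w)"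
    using P const by simp
  ultimately show ?thesis by blast
qed

section \<open>From trigonometric polynomials to algebraic polynomials\<close>

text \<open>The polynomial Q with e^{iNt} (sum_{k<=N} A_k cos kt + B_k sin kt) = Q(e^{it}):
  each harmonic contributes the two monomials z^{N+k} and z^{N-k}.\<close>

definition laurent_shift :: "nat \<Rightarrow> (nat \<Rightarrow> real) \<Rightarrow> (nat \<Rightarrow> real) \<Rightarrow> complex poly" where
  "laurent_shift N A B =
     (\<Sum>k\<le>N. monom ((of_real (A k) - \<i> * of_real (B k)) / 2) (N + k)
            + monom ((of_real (A k) + \<i> * of_real (B k)) / 2) (N - k))"

lemma poly_laurent_shift_cis:
  "poly (laurent_shift N A B) (cis t)
     = cis t ^ N * of_real (\<Sum>k\<le>N. A k * cos (real k * t) + B k * sin (real k * t))"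
proof -
  have harmonic: "(of_real (A k) - \<i> * of_real (B k)) / 2 * cis t ^ (N + k)
                + (of_real (A k) + \<i> * of_real (B k)) / 2 * cis t ^ (N - k)
      = cis t ^ N * of_real (A k * cos (real k * t) + B k * sin (real k * t))"
    if k: "k \<le> N" for k
  proof -
    define w where "w = cis t ^ k"
    have w_unit: "w * cnj w = 1" unfolding w_def
      by (simp add: power_mult_distrib[symmetric] cis_cnj cis_mult)
    have up: "cis t ^ (N + k) = cis t ^ N * w" unfolding w_def by (simp add: power_add)
    have "cis t ^ N = cis t ^ (N - k) * w" unfolding w_def using k by (simp add: power_add[symmetric])
    then have down: "cis t ^ (N - k) = cis t ^ N * cnj w"
      using w_unit by (metis mult.assoc mult.right_neutral)
    have w_cis: "w = cis (real k * t)" unfolding w_def by (rule Complex.DeMoivre)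
    have pair: "(of_real (A k) - \<i> * of_real (B k)) / 2 * w
              + (of_real (A k) + \<i> * of_real (B k)) / 2 * cnj w
        = of_real (A k * cos (real k * t) + B k * sin (real k * t))"
      unfolding w_cis cis_cnj by (simp add: complex_eq_iff field_simps)
    show ?thesis unfolding up down pair[symmetric] by (simp add: algebra_simps)
  qed
  have "poly (laurent_shift N A B) (cis t)
      = (\<Sum>k\<le>N. (of_real (A k) - \<i> * of_real (B k)) / 2 * cis t ^ (N + k)
                + (of_real (A k) + \<i> * of_real (B k)) / 2 * cis t ^ (N - k))"
    unfolding laurent_shift_def by (simp add: poly_sum poly_monom)
  also have "\<dots> = (\<Sum>k\<le>N. cis t ^ N * of_real (A k * cos (real k * t) + B k * sin (real k * t)))"
    by (intro sum.cong refl harmonic) simp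
  finally show ?thesis by (simp add: sum_distrib_left)
qed

lemma coeff_laurent_shift:
  assumes "N \<ge> 1"
  shows "coeff (laurent_shift N A B) (2*N) = (of_real (A N) - \<i> * of_real (B N)) / 2"
    and "coeff (laurent_shift N A B) 0 = (of_real (A N) + \<i> * of_real (B N)) / 2"
    and "degree (laurent_shift N A B) \<le> 2*N"
proof -
  have coeff: "coeff (laurent_shift N A B) j =
      (\<Sum>k\<le>N. (if N + k = j then (of_real (A k) - \<i> * of_real (B k)) / 2 else 0)
             + (if N - k = j then (of_real (A k) + \<i> * of_real (B k)) / 2 else 0))" for j
    unfolding laurent_shift_def by (simp add: coeff_sum coeff_monom)
  have "coeff (laurent_shift N A B) (2*N)
      = (\<Sum>k\<le>N. if k = N then (of_real (A k) - \<i> * of_real (B k)) / 2 else 0)"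
    unfolding coeff using assms by (intro sum.cong) auto
  then show "coeff (laurent_shift N A B) (2*N) = (of_real (A N) - \<i> * of_real (B N)) / 2"
    by simp
  have "coeff (laurent_shift N A B) 0
      = (\<Sum>k\<le>N. if k = N then (of_real (A k) + \<i> * of_real (B k)) / 2 else 0)"
    unfolding coeff using assms by (intro sum.cong) auto
  then show "coeff (laurent_shift N A B) 0 = (of_real (A N) + \<i> * of_real (B N)) / 2"
    by simp
  show "degree (laurent_shift N A B) \<le> 2*N"
    by (rule degree_le) (auto simp: coeff intro!: sum.neutral)
qed

text \<open>Every f in F_n(y) is (y/2) e^{-int} Q(e^{it}) in modulus, with Q monic of degree
  2n and Q(0) = 1 (the two extreme coefficients both come from y cos nt).\<close>

lemma polynomial_of_F_y:
  assumes n: "n \<ge> 1" and y: "y > 0" and g: "trig_poly (n-1) g"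
  shows "\<exists>Q::complex poly. degree Q = 2*n \<and> lead_coeff Q = 1 \<and> poly Q 0 = 1 \<and>
           (\<forall>t. cmod (poly Q (cis t)) = (2/y) * \<bar>y * cos (real n * t) + g t\<bar>)"
proof -
  obtain a b where g_def: "g = (\<lambda>t. \<Sum>k\<le>n-1. a k * cos (real k * t) + b k * sin (real k * t))"
    using g unfolding trig_poly_def by blast
  define A where "A = a(n := y)"
  define B where "B = b(n := 0)"
  have f_sum: "y * cos (real n * t) + g t
      = (\<Sum>k\<le>n. A k * cos (real k * t) + B k * sin (real k * t))" for t
  proof -
    obtain m where m: "n = Suc m" using n by (cases n) auto
    have "(\<Sum>k\<le>n. A k * cos (real k * t) + B k * sin (real k * t))
        = (\<Sum>k\<le>m. A k * cos (real k * t) + B k * sin (real k * t))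
          + (A n * cos (real n * t) + B n * sin (real n * t))"
      unfolding m by (rule sum.atMost_Suc)
    also have "(\<Sum>k\<le>m. A k * cos (real k * t) + B k * sin (real k * t)) = g t"
      unfolding g_def m A_def B_def by (intro sum.cong) auto
    finally show ?thesis unfolding A_def B_def by simp
  qed
  define Q where "Q = smult (of_real (2/y)) (laurent_shift n A B)"
  note coeffs = coeff_laurent_shift[OF n, of A B]
  have top: "coeff Q (2*n) = 1" and bottom: "coeff Q 0 = 1"
    unfolding Q_def using y coeffs(1,2) by (simp_all add: A_def B_def mult.commute)
  have "degree Q \<le> 2*n" unfolding Q_def using coeffs(3) by simp
  then have deg: "degree Q = 2*n" using top le_degree[of Q "2*n"] by simp
  moreover have "lead_coeff Q = 1" using deg top by simp
  moreover have "poly Q 0 = 1" using bottom by (simp add: poly_0_coeff_0)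
  moreover have "cmod (poly Q (cis t)) = (2/y) * \<bar>y * cos (real n * t) + g t\<bar>" for t
  proof -
    have "poly Q (cis t) = of_real (2/y) * (cis t ^ n * of_real (y * cos (real n * t) + g t))"
      unfolding Q_def f_sum by (simp only: poly_smult poly_laurent_shift_cis)
    then show ?thesis using y by (simp only: norm_mult norm_power norm_cis norm_of_real) simp
  qed
  ultimately show ?thesis by blast
qed

section \<open>From unimodular polynomials to trigonometric polynomials\<close>

text \<open>For a unimodular root x, the square root s of x turns the factor e^{it} - x,
  multiplied by conj(i s) e^{-it/2}, into the real number 2 sin((t - arg x)/2).\<close>

lemma half_angle_factor:
  fixes x :: complex
  assumes x: "cmod x = 1"
  defines "s \<equiv> cis (Arg x / 2)"
  shows "(\<i> * s)^2 = - x" "Im (cnj (\<i> * s) * cis (- (t / 2)) * (cis t - x)) = 0"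
proof -
  have "x \<noteq> 0" using x by auto
  have s2: "s^2 = x"
  proof -
    have "s^2 = cis (real 2 * (Arg x / 2))" unfolding s_def by (rule Complex.DeMoivre)
    also have "\<dots> = x" using cis_Arg[OF \<open>x \<noteq> 0\<close>] x by (simp add: sgn_div_norm)
    finally show ?thesis .
  qed
  then show "(\<i> * s)^2 = - x" by (simp add: power_mult_distrib)
  define w where "w = cis (t / 2)"
  have ww: "cnj w * w = 1" unfolding w_def by (simp add: cis_cnj cis_mult)
  have ss: "cnj s * s = 1" unfolding s_def by (simp add: cis_cnj cis_mult)
  have ct: "cis t = w^2" unfolding w_def by (simp add: Complex.DeMoivre)
  have cm: "cis (- (t / 2)) = cnj w" unfolding w_def by (simp add: cis_cnj)
  define z where "z = cnj s * w"
  have "cnj (\<i> * s) * cis (- (t / 2)) * (cis t - x)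
      = - \<i> * (cnj s * cnj w * w^2 - cnj s * cnj w * s^2)"
    unfolding cm ct s2[symmetric] by (simp add: algebra_simps)
  also have "cnj s * cnj w * w^2 = z" unfolding z_def power2_eq_square
    using ww by (metis mult.assoc mult.commute mult.left_neutral)
  also have "cnj s * cnj w * s^2 = cnj z" unfolding z_def power2_eq_square
    using ss by (simp add: algebra_simps)
  finally have rotated: "cnj (\<i> * s) * cis (- (t / 2)) * (cis t - x) = - \<i> * (z - cnj z)" .
  show "Im (cnj (\<i> * s) * cis (- (t / 2)) * (cis t - x)) = 0" unfolding rotated by simp
qed

lemma half_angle_product:
  fixes M :: "complex multiset"
  assumes "\<forall>x\<in>#M. cmod x = 1"
  shows "cmod (\<Prod>x\<in>#M. \<i> * cis (Arg x / 2)) = 1 \<and>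
    (\<Prod>x\<in>#M. \<i> * cis (Arg x / 2))^2 = (\<Prod>x\<in>#M. - x) \<and>
    (\<forall>t. Im (cnj (\<Prod>x\<in>#M. \<i> * cis (Arg x / 2)) * cis (- (real (size M) * t / 2))
               * (\<Prod>x\<in>#M. cis t - x)) = 0)"
  using assms
proof (induction M)
  case empty
  then show ?case by simp
next
  case (add x M)
  define L where "L = (\<Prod>x\<in>#M. \<i> * cis (Arg x / 2))"
  define s where "s = cis (Arg x / 2)"
  have IH: "cmod L = 1 \<and> L^2 = (\<Prod>x\<in>#M. - x) \<and>
    (\<forall>t. Im (cnj L * cis (- (real (size M) * t / 2)) * (\<Prod>x\<in>#M. cis t - x)) = 0)"
    unfolding L_def by (rule add.IH) (use add.prems in simp)
  have x: "cmod x = 1" using add.prems by simp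
  note half = half_angle_factor[OF x, folded s_def]
  have "cmod (\<i> * s * L) = 1" using IH unfolding s_def by (simp add: norm_mult)
  moreover have "(\<i> * s * L)^2 = - x * (\<Prod>x\<in>#M. - x)"
    using IH half(1) by (simp add: power_mult_distrib)
  moreover have "Im (cnj (\<i> * s * L) * cis (- (real (Suc (size M)) * t / 2))
                   * ((cis t - x) * (\<Prod>x\<in>#M. cis t - x))) = 0" for t
  proof -
    have split: "cis (- (real (Suc (size M)) * t / 2)) = cis (- (t/2)) * cis (- (real (size M) * t / 2))"
      by (simp add: cis_mult algebra_simps add_divide_distrib)
    define u where "u = cnj (\<i> * s) * cis (- (t / 2)) * (cis t - x)"
    define v where "v = cnj L * cis (- (real (size M) * t / 2)) * (\<Prod>x\<in>#M. cis t - x)"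
    have "cnj (\<i> * s * L) * cis (- (real (Suc (size M)) * t / 2))
            * ((cis t - x) * (\<Prod>x\<in>#M. cis t - x)) = u * v"
      unfolding u_def v_def split complex_cnj_mult by (simp only: mult_ac)
    moreover have "Im u = 0" unfolding u_def by (rule half(2))
    moreover have "Im v = 0" unfolding v_def using IH by blast
    ultimately show ?thesis by simp
  qed
  ultimately show ?case unfolding L_def s_def by (simp add: mult_ac)
qed

lemma unimodular_real_rotation:
  assumes P: "P \<in> unimodular_monic (2*n)"
  shows "\<exists>L. cmod L = 1 \<and> coeff P 0 = L^2 \<and>
             (\<forall>t. Im (cnj L * cis (- (real n * t)) * poly P (cis t)) = 0)"
proof -
  have deg: "degree P = 2*n" and monic: "lead_coeff P = 1"
    and roots: "\<forall>z. poly P z = 0 \<longrightarrow> cmod z = 1"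
    using P unfolding unimodular_monic_def by auto
  define M where "M = proots P"
  have "P \<noteq> 0" using monic by auto
  have P_prod: "P = (\<Prod>x\<in>#M. [:- x, 1:])"
    using complex_poly_decompose_multiset[of P] monic unfolding M_def by simp
  have poly_P: "poly P z = (\<Prod>x\<in>#M. z - x)" for z
    by (subst P_prod) (simp add: poly_prod_mset)
  have size_M: "real (size M) * t / 2 = real n * t" for t
    unfolding M_def using size_proots_complex[of P] deg by simp
  have "\<forall>x\<in>#M. cmod x = 1" using roots \<open>P \<noteq> 0\<close> unfolding M_def by simp
  note L = half_angle_product[OF this]
  show ?thesis
  proof (intro exI conjI allI)
    show "cmod (\<Prod>x\<in>#M. \<i> * cis (Arg x / 2)) = 1" using L by blast
    show "coeff P 0 = (\<Prod>x\<in>#M. \<i> * cis (Arg x / 2))^2"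
      using L poly_P[of 0] by (simp add: poly_0_coeff_0)
    show "Im (cnj (\<Prod>x\<in>#M. \<i> * cis (Arg x / 2)) * cis (- (real n * t)) * poly P (cis t)) = 0" for t
      using L unfolding poly_P size_M by metis
  qed
qed

lemma rotated_poly_expansion:
  assumes n: "n \<ge> 1" and deg: "degree P = 2*n" and monic: "lead_coeff P = 1"
    and L: "cmod L = 1" "coeff P 0 = L^2"
  shows "Re (cnj L * cis (- (real n * t)) * poly P (cis t))
       = 2 * cos (real n * t - Arg L)
         + (\<Sum>k\<in>{1..<2*n}. Re (cnj L * coeff P k * cis ((real k - real n) * t)))"
proof -
  define e where "e k = cnj L * coeff P k" for k
  have "L \<noteq> 0" using L(1) by auto
  then have L_cis: "L = cis (Arg L)"
    using cis_Arg L(1) by (simp add: sgn_div_norm)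
  have e_top: "e (2*n) = cnj L" unfolding e_def using monic deg by simp
  have e_bottom: "e 0 = L"
  proof -
    have "cnj L * L = 1" using L(1) complex_norm_square[of L] by (simp add: mult.commute)
    then show ?thesis unfolding e_def L(2) power2_eq_square by (metis mult.assoc mult.left_neutral)
  qed
  have harmonics: "cnj L * cis (- (real n * t)) * poly P (cis t)
      = (\<Sum>k\<le>2*n. e k * cis ((real k - real n) * t))"
  proof -
    have "cis (- (real n * t)) * cis t ^ k = cis ((real k - real n) * t)" for k
      by (simp add: Complex.DeMoivre cis_mult algebra_simps)
    then show ?thesis
      unfolding poly_altdef deg e_def by (simp add: sum_distrib_left mult_ac)
  qed
  have "{..2*n} = insert 0 (insert (2*n) {1..<2*n})" using n by auto
  then have "Re (\<Sum>k\<le>2*n. e k * cis ((real k - real n) * t))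
      = Re (e 0 * cis (- (real n * t))) + Re (e (2*n) * cis (real n * t))
        + (\<Sum>k\<in>{1..<2*n}. Re (e k * cis ((real k - real n) * t)))"
    using n by (simp add: Re_sum add.assoc)
  also have "Re (e 0 * cis (- (real n * t))) = cos (real n * t - Arg L)"
  proof -
    have "cos (Arg L - real n * t) = cos (real n * t - Arg L)" by (metis cos_minus minus_diff_eq)
    then show ?thesis unfolding e_bottom by (subst L_cis) (simp add: cis_mult)
  qed
  also have "Re (e (2*n) * cis (real n * t)) = cos (real n * t - Arg L)"
    unfolding e_top by (subst L_cis) (simp add: cis_cnj cis_mult)
  finally show ?thesis unfolding harmonics e_def by simp
qed

text \<open>Every level set {|P(e^{it})| >= 2/y} with P unimodular monic of degree 2n has the
  measure mu(f) of some f in F_n(y): rotate t by arg L / n and scale by y/2.\<close>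

lemma F_y_of_unimodular:
  assumes n: "n \<ge> 1" and y: "y > 0" and P: "P \<in> unimodular_monic (2*n)"
  shows "\<exists>f\<in>F_y n y. mu f = measure lborel {t \<in> {0..<2*pi}. cmod (poly P (cis t)) \<ge> 2/y}"
proof -
  have deg: "degree P = 2*n" and monic: "lead_coeff P = 1"
    using P unfolding unimodular_monic_def by auto
  obtain L where L: "cmod L = 1" "coeff P 0 = L^2"
    and real: "\<And>t. Im (cnj L * cis (- (real n * t)) * poly P (cis t)) = 0"
    using unimodular_real_rotation[OF P] by blast
  define R where "R t = cnj L * cis (- (real n * t)) * poly P (cis t)" for t
  define a where "a = Arg L / real n"
  define g where "g s = y / 2 * (\<Sum>k\<in>{1..<2*n}.
                    Re (cnj L * coeff P k * cis (of_int (int k - int n) * (s + a))))" for s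
  define f where "f s = y * cos (real n * s) + g s" for s
  have f_R: "f s = y / 2 * Re (R (s + a))" for s
    using n unfolding f_def g_def R_def rotated_poly_expansion[OF n deg monic L] a_def
    by (simp add: algebra_simps of_nat_diff)
  have "trig_poly (n-1) g"
    unfolding g_def by (intro trig_poly_scale trig_poly_sum trig_poly_Re_cis) auto
  then have f_in: "f \<in> F_y n y" unfolding F_y_def f_def[abs_def] by auto
  have "\<bar>f t\<bar> \<ge> 1 \<longleftrightarrow> 2/y \<le> cmod (poly P (cis (t + a)))" for t
  proof -
    have "\<bar>f t\<bar> = y / 2 * cmod (poly P (cis (t + a)))"
      unfolding f_R using cmod_eq_Re[OF real[of "t + a"]] L(1) y
      by (simp add: R_def abs_mult norm_mult)
    then show ?thesis using y by (auto simp: field_simps)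
  qed
  then have "mu f = measure lborel {t \<in> {0..<2*pi}. 2/y \<le> cmod (poly P (cis (t + a)))}"
    unfolding mu_def by simp
  also have "\<dots> = measure lborel {t \<in> {0..<2*pi}. 2/y \<le> cmod (poly P (cis t))}"
  proof (rule measure_periodic_translate)
    show "(2/y \<le> cmod (poly P (cis (x + 2 * pi * of_int k)))) = (2/y \<le> cmod (poly P (cis x)))"
      for x and k :: int
      by (simp add: cis_mult[symmetric])
    have "closed {x. 2/y \<le> cmod (poly P (cis x))}"
      by (intro closed_Collect_le continuous_intros)
    then show "{x. 2/y \<le> cmod (poly P (cis x))} \<in> sets borel" by simp
  qed
  finally show ?thesis using f_in by auto
qed

section \<open>Comparison of the two extremal problems\<close>

text \<open>Every f in F_n(y) dominates some unimodular level set: its polynomial Q bounds a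
  unimodular P from above on the circle.\<close>

lemma unimodular_below_F_y:
  assumes n: "n \<ge> 1" and y: "y > 0" and f: "f \<in> F_y n y"
  shows "\<exists>P\<in>unimodular_monic (2*n).
           measure lborel {t \<in> {0..<2*pi}. 2/y \<le> cmod (poly P (cis t))} \<le> mu f"
proof -
  obtain g where g: "trig_poly (n - 1) g" and f_def: "f = (\<lambda>t. y * cos (real n * t) + g t)"
    using f unfolding F_y_def by blast
  obtain Q :: "complex poly" where deg: "degree Q = 2*n" and monic: "lead_coeff Q = 1"
    and const: "poly Q 0 = 1" and Q_f: "\<And>t. cmod (poly Q (cis t)) = (2/y) * \<bar>f t\<bar>"
    using polynomial_of_F_y[OF n y g] unfolding f_def by blast
  obtain P where P: "P \<in> unimodular_monic (2*n)"
    and P_Q: "\<And>w. cmod w = 1 \<Longrightarrow> cmod (poly P w) \<le> cmod (poly Q w)"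
    using unimodular_minorant[of Q] monic const deg by auto
  define A where "A = {t \<in> {0..<2*pi}. 2/y \<le> cmod (poly P (cis t))}"
  define B where "B = {t \<in> {0..<2*pi}. 1 \<le> \<bar>f t\<bar>}"
  have "A \<subseteq> B"
  proof
    fix t assume "t \<in> A"
    then have "2/y \<le> (2/y) * \<bar>f t\<bar>"
      unfolding A_def using P_Q[of "cis t"] Q_f[of t] by auto
    then show "t \<in> B" using \<open>t \<in> A\<close> y unfolding A_def B_def by (simp add: field_simps)
  qed
  moreover have "A \<in> sets lborel" unfolding A_def
    by (rule sets_lborel_superlevel) (intro continuous_intros)
  moreover have "B \<in> fmeasurable lborel"
  proof -
    have "continuous_on UNIV (\<lambda>t. \<bar>f t\<bar>)"
      unfolding f_def using trig_poly_continuous[OF g] by (intro continuous_intros) auto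
    then show ?thesis unfolding B_def fmeasurable_def
      using sets_lborel_superlevel emeasure_interval_subset_finite by (auto simp: less_top)
  qed
  ultimately have "measure lborel A \<le> measure lborel B" by (rule measure_mono_fmeasurable)
  then show ?thesis using P unfolding A_def B_def mu_def by blast
qed

lemma cInf_eq_mutually_dominated:
  fixes A B :: "real set"
  assumes "A \<noteq> {}" "B \<noteq> {}" "bdd_below A" "bdd_below B"
    and "\<And>a. a \<in> A \<Longrightarrow> \<exists>b\<in>B. b \<le> a" and "\<And>b. b \<in> B \<Longrightarrow> \<exists>a\<in>A. a \<le> b"
  shows "Inf A = Inf B"
  using cInf_mono[of A B] cInf_mono[of B A] assms by (simp add: antisym)

lemma unimodular_monic_nonempty: "unimodular_monic m \<noteq> {}"
proof -
  have "lead_coeff ([:-1, 1:] ^ m :: complex poly) = 1"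
    by (simp add: lead_coeff_power)
  moreover have "degree ([:-1, 1:] ^ m :: complex poly) = m" by (simp add: degree_power_eq)
  ultimately have "[:-1, 1:] ^ m \<in> unimodular_monic m" unfolding unimodular_monic_def by auto
  then show ?thesis by blast
qed

theorem corollary1:
  fixes n :: nat and y :: real
  assumes "n \<ge> 1" and "y > 1"
  shows "sigma n y = delta (2 * n) (2 / y)"
proof -
  have n: "n \<ge> 1" and y: "y > 0" using assms by auto
  define level where "level P = measure lborel {t \<in> {0..<2*pi}. cmod (poly P (cis t)) \<ge> 2/y}"
    for P :: "complex poly"
  have "(\<lambda>t. y * cos (real n * t) + 0) \<in> F_y n y"
    unfolding F_y_def using trig_poly_zero by blast
  then have "Inf (mu ` F_y n y) = Inf (level ` unimodular_monic (2*n))"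
  proof (intro cInf_eq_mutually_dominated)
    show "bdd_below (mu ` F_y n y)" unfolding mu_def by (intro bdd_belowI[of _ 0]) auto
    show "bdd_below (level ` unimodular_monic (2*n))"
      unfolding level_def by (intro bdd_belowI[of _ 0]) auto
    show "level ` unimodular_monic (2*n) \<noteq> {}" using unimodular_monic_nonempty by blast
    show "\<exists>b\<in>level ` unimodular_monic (2*n). b \<le> a" if "a \<in> mu ` F_y n y" for a
      using that unimodular_below_F_y[OF n y] unfolding level_def by fastforce
    show "\<exists>a\<in>mu ` F_y n y. a \<le> b" if "b \<in> level ` unimodular_monic (2*n)" for b
      using that F_y_of_unimodular[OF n y] unfolding level_def by force
  qed auto
  then show ?thesis unfolding sigma_def delta_def level_def .
qed

end
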